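(* Let $q$ be a prime power, $m\ge2$, and $\lambda$ a positive divisor of $q+1$ with $\lambda<q+1$; let $n=\frac{q^m+1}{\lambda}$. Then $\mathrm{ord}_n(q)=2m$. Moreover, for every $s\in\mathbb{Z}_n$, the $q$-cyclotomic coset of $s$ modulo $n$ is $C_s=\{y_{s,k},\,n-y_{s,k}:0\le k\le m-1\}$, where $y_{s,k}=sq^k\bmod n$.
   Context: For $0\le s\le n-1$, the $q$-cyclotomic coset of $s$ modulo $n$ is $C_s=\{sq^i\bmod n:0\le i\le \mathrm{ord}_n(q)-1\}$. *)

theory Defs
  imports "HOL-Number_Theory.Number_Theory"
begin

definition cyclotomic_coset :: "nat \<Rightarrow> nat \<Rightarrow> nat \<Rightarrow> nat set" where
  "cyclotomic_coset q n s = {(s * q ^ i) mod n | i. i \<le> ord n q - 1}"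

end

theory Submission
  imports Defs
begin

(* Since q^m = -1 (mod n), multiplying by q^m negates residues modulo n, so the
   orbit of s under multiplication by q consists of the residues of s q^k for k < m
   and their negatives.  The order is exactly 2m because lambda <= (q+1)/2 forces
   n > q^(m-1) + 1: then for k < m the residues of q^k and q^(m+k) are q^k and
   n - q^k, and among these only q^0 equals 1. *)

lemma mod_eq_minus_mod_of_dvd_add:
  fixes n x y :: nat
  assumes "n dvd x + y"
  shows "y mod n = (n - x mod n) mod n"
proof (cases "n dvd x")
  case True
  then have "n dvd y" using assms by (simp add: dvd_add_right_iff)
  with True show ?thesis by simp
next
  case False
  then have "0 < n" "0 < x mod n"
    using assms by (auto simp: dvd_eq_mod_eq_0 intro: Nat.gr0I)
  have "n dvd x mod n + y mod n" using assms by (simp add: mod_add_eq dvd_eq_mod_eq_0)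
  moreover have "x mod n + y mod n < 2 * n"
    using mod_less_divisor[OF \<open>0 < n\<close>, of x] mod_less_divisor[OF \<open>0 < n\<close>, of y] by linarith
  ultimately have "x mod n + y mod n = n"
    using \<open>0 < x mod n\<close> by (auto simp: dvd_def less_2_cases_iff)
  then show ?thesis by (metis add_diff_cancel_left' mod_mod_trivial)
qed

lemma double_le_of_proper_dvd:
  fixes d n :: nat
  assumes "d dvd n" "d < n"
  shows "2 * d \<le> n"
proof -
  obtain c where "n = d * c"
    using assms(1) ..
  moreover have "c \<noteq> 0" "c \<noteq> 1"
    using assms \<open>n = d * c\<close> by auto
  ultimately show ?thesis
    by (simp add: mult.commute)
qed

lemma mult_power_add_mod_of_dvd_power_plus_one:
  fixes n q m s k :: nat
  assumes "n dvd q ^ m + 1"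
  shows "s * q ^ (m + k) mod n = (n - s * q ^ k mod n) mod n"
proof (rule mod_eq_minus_mod_of_dvd_add)
  have "n dvd s * q ^ k * (q ^ m + 1)"
    using assms by (rule dvd_mult)
  moreover have "s * q ^ k * (q ^ m + 1) = s * q ^ k + s * q ^ (m + k)"
    by (simp add: algebra_simps power_add)
  ultimately show "n dvd s * q ^ k + s * q ^ (m + k)"
    by (simp only:)
qed

lemma power_double_cong_one_of_dvd_power_plus_one:
  fixes n q m :: nat
  assumes "n dvd q ^ m + 1"
  shows "[q ^ (2 * m) = 1] (mod n)"
proof -
  have "int n dvd int q ^ m + 1"
    using assms by (metis of_nat_1 of_nat_add of_nat_dvd_iff of_nat_power)
  then have "[int q ^ m = - 1] (mod int n)"
    by (simp add: cong_iff_dvd_diff)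
  then have "[(int q ^ m)\<^sup>2 = (- 1)\<^sup>2] (mod int n)"
    by (rule cong_pow)
  then show ?thesis
    by (simp add: power_mult mult.commute flip: cong_int_iff)
qed

lemma power_pred_plus_one_less_of_mult_eq_power_plus_one:
  fixes q m lam n :: nat
  assumes "2 \<le> q" "2 \<le> m" "2 * lam \<le> q + 1" "n * lam = q ^ m + 1"
  shows "q ^ (m - 1) + 1 < n"
proof -
  have "q \<le> q ^ (m - 1)"
    using power_increasing[of 1 "m - 1" q] assms(1,2) by simp
  then obtain a' q' where "q ^ (m - 1) = a' + 2" "q = q' + 2"
    using assms(1) by (metis le_add_diff_inverse2 le_trans)
  then have "(q ^ (m - 1) + 1) * (q + 1) < 2 * (q ^ (m - 1) * q + 1)"
    by (simp add: algebra_simps)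
  also have "q ^ (m - 1) * q = q ^ m"
    using assms(2) power_minus_mult[of m q] by simp
  also have "2 * (q ^ m + 1) = n * (2 * lam)"
    using assms(4) by simp
  also have "\<dots> \<le> n * (q + 1)"
    using assms(3) by (rule mult_le_mono2)
  finally show ?thesis
    by (meson mult_less_cancel2)
qed

lemma ord_eq_double_of_dvd_power_plus_one:
  fixes n q m :: nat
  assumes "n dvd q ^ m + 1" "q ^ (m - 1) + 1 < n" "1 < q" "0 < m"
  shows "ord n q = 2 * m"
proof -
  have small: "0 < q ^ k \<and> q ^ k + 1 < n" if "k < m" for k
  proof -
    have "q ^ k \<le> q ^ (m - 1)"
      using that assms(3) by (intro power_increasing) auto
    moreover have "0 < q ^ k"
      using assms(3) by simp
    ultimately show ?thesis
      using assms(2) by linarith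
  qed
  have low: "q ^ k mod n = q ^ k" if "k < m" for k
    using small[OF that] by simp
  have high: "q ^ (m + k) mod n = n - q ^ k" if "k < m" for k
    using mult_power_add_mod_of_dvd_power_plus_one[OF assms(1), of 1 k] low[OF that] small[OF that]
    by simp
  have "ord n q dvd 2 * m"
    using power_double_cong_one_of_dvd_power_plus_one[OF assms(1)] ord_divides by blast
  then have "0 < ord n q" "ord n q \<le> 2 * m"
    using assms(4) by (auto simp del: ord_gt_0_iff intro: Nat.gr0I dvd_imp_le)
  moreover have "\<not> [q ^ d = 1] (mod n)" if d_pos: "0 < d" and d_less: "d < 2 * m" for d
  proof (cases "d < m")
    case True
    then show ?thesis
      using low[OF True] d_pos assms(2,3) by (simp add: cong_def)
  next
    case False
    then obtain k where k: "d = m + k" "k < m"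
      using d_less by (metis add_diff_inverse_nat add_less_imp_less_left mult_2)
    then show ?thesis
      using high[OF k(2)] small[OF k(2)] by (auto simp: cong_def)
  qed
  ultimately show ?thesis
    using ord[of q n] by (meson le_neq_implies_less)
qed

lemma cyclotomic_coset_eq_image:
  assumes "0 < ord n q"
  shows "cyclotomic_coset q n s = (\<lambda>i. s * q ^ i mod n) ` {..<ord n q}"
  using assms unfolding cyclotomic_coset_def by (auto simp del: ord_gt_0_iff)

lemma cyclotomic_coset_eq_UN_plus_minus:
  fixes n q m s :: nat
  assumes "ord n q = 2 * m" "n dvd q ^ m + 1" "0 < m"
  shows "cyclotomic_coset q n s = (\<Union>k<m. {s * q ^ k mod n, (n - s * q ^ k mod n) mod n})"
proof -
  have "{..<2 * m} = (\<Union>k<m. {k, m + k})"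
    by (auto simp: Bex_def) presburger
  then have "cyclotomic_coset q n s = (\<Union>k<m. {s * q ^ k mod n, s * q ^ (m + k) mod n})"
    using assms(1,3) by (simp add: cyclotomic_coset_eq_image image_UN)
  then show ?thesis
    by (simp add: mult_power_add_mod_of_dvd_power_plus_one[OF assms(2)])
qed

theorem lemma5:
  fixes q m lam n :: nat
  assumes "primepow q"
    and "m \<ge> 2"
    and "lam > 0" and "lam dvd q + 1" and "lam < q + 1"
    and "lam dvd q ^ m + 1"
    and "n = (q ^ m + 1) div lam"
  shows "ord n q = 2 * m \<and>
    (\<forall>s < n. cyclotomic_coset q n s =
       (\<Union>k<m. {(s * q ^ k) mod n, (n - (s * q ^ k) mod n) mod n}))"
proof -
  have "2 \<le> q"
    using primepow_gt_Suc_0[OF assms(1)] by simp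
  have "n * lam = q ^ m + 1"
    using assms(6,7) by simp
  then have n_dvd: "n dvd q ^ m + 1"
    by (metis dvd_triv_left)
  have "q ^ (m - 1) + 1 < n"
    using \<open>2 \<le> q\<close> assms(2) double_le_of_proper_dvd[OF assms(4,5)] \<open>n * lam = q ^ m + 1\<close>
    by (rule power_pred_plus_one_less_of_mult_eq_power_plus_one)
  then have "ord n q = 2 * m"
    using n_dvd \<open>2 \<le> q\<close> assms(2) by (intro ord_eq_double_of_dvd_power_plus_one) auto
  moreover have "0 < m"
    using assms(2) by simp
  ultimately show ?thesis
    using n_dvd by (simp add: cyclotomic_coset_eq_UN_plus_minus)
qed

end
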